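(* Let $p$ be a prime and $a,b,c\ge0$ integers with $a,b\le p-1$ and $c\le a+b$. Then every root of $f(a,b,c)$ in $\overline{\mathbb{F}}_p\setminus\{0,1\}$ is a simple root.
   Context: For non-negative integers $a,b,c$, $f(a,b,c)\in\overline{\mathbb{F}}_p[t]$ is $f(a,b,c)=\sum_{i_2+i_3=c}\binom{a}{i_2}\binom{b}{i_3}t^{i_2}$ (binomial coefficients reduced mod $p$, $\binom{n}{i}=0$ for $i<0$ or $i>n$). *)

theory Defs
  imports "HOL-Computational_Algebra.Computational_Algebra"
begin

definition fpoly :: "nat \<Rightarrow> nat \<Rightarrow> nat \<Rightarrow> 'k::field poly" where
  "fpoly a b c = (\<Sum>i\<in>{0..c}. monom (of_nat ((a choose i) * (b choose (c - i)))) i)"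

end

theory Submission
  imports Defs
begin

text \<open>The coefficients of f = f(a,b,c) obey a two-term recurrence, which says that f solves the
  hypergeometric equation t(1 - t) f'' + (1 + b - c + (a + c - 1) t) f' - a c f = 0.
  If x \<notin> {0, 1} were a root of multiplicity m \<ge> 2, write f = (t - x)^m q with q(x) \<noteq> 0; dividing
  the equation by (t - x)^(m-2) and evaluating at x gives x(1 - x) m (m - 1) q(x) = 0. This is
  impossible as long as m < p, which holds because m \<le> deg f \<le> a < p; and f \<noteq> 0 because the
  binomial coefficients of numbers below p do not vanish mod p.\<close>

lemma of_nat_Suc_mult_binomial_Suc:
  "of_nat (Suc k) * of_nat (n choose Suc k)
     = (of_nat n - of_nat k) * (of_nat (n choose k) :: 'a::comm_ring_1)"
proof (cases "k < n")
  case True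
  then have "Suc k * (n choose Suc k) = (n - k) * (n choose k)"
    by (metis binomial_absorb_comp binomial_absorption)
  then have "(of_nat (Suc k * (n choose Suc k)) :: 'a) = of_nat ((n - k) * (n choose k))"
    by (rule arg_cong)
  with True show ?thesis by (simp add: of_nat_diff algebra_simps)
next
  case False
  then show ?thesis by (cases "k = n") (simp_all add: binomial_eq_0)
qed

lemma coeff_fpoly:
  "coeff (fpoly a b c :: 'k::field poly) n =
     (if n \<le> c then of_nat (a choose n) * of_nat (b choose (c - n)) else 0)"
  unfolding fpoly_def by (auto simp: coeff_sum coeff_monom)

lemma coeff_fpoly_recurrence:
  "of_nat (Suc n) * (of_nat n + 1 + of_nat b - of_nat c) * coeff (fpoly a b c) (Suc n)
     = (of_nat a - of_nat n) * (of_nat c - of_nat n) * (coeff (fpoly a b c) n :: 'k::field)"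
proof (cases "n < c")
  case True
  define k where "k = c - Suc n"
  have c: "c = Suc (n + k)" using True k_def by simp
  have "of_nat (Suc n) * (of_nat n + 1 + of_nat b - of_nat c) * coeff (fpoly a b c) (Suc n)
      = (of_nat (Suc n) * of_nat (a choose Suc n)) * ((of_nat b - of_nat k) * (of_nat (b choose k) :: 'k))"
    by (simp add: coeff_fpoly c algebra_simps)
  also have "\<dots> = ((of_nat a - of_nat n) * of_nat (a choose n)) * (of_nat (Suc k) * of_nat (b choose Suc k))"
    by (simp only: of_nat_Suc_mult_binomial_Suc)
  also have "\<dots> = (of_nat a - of_nat n) * (of_nat c - of_nat n) * coeff (fpoly a b c) n"
    by (simp add: coeff_fpoly c Suc_diff_le algebra_simps)
  finally show ?thesis .
next
  case False
  then show ?thesis by (cases "n = c") (simp_all add: coeff_fpoly)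
qed

lemma coeff_hypergeometric_operator:
  fixes f :: "'a::idom poly"
  shows "coeff ([:0, 1, -1:] * pderiv (pderiv f) + [:\<alpha>, \<beta>:] * pderiv f - [:\<gamma>:] * f) n
    = of_nat (Suc n) * (of_nat n + \<alpha>) * coeff f (Suc n)
      - (of_nat n * (of_nat n - 1) - \<beta> * of_nat n + \<gamma>) * coeff f n"
  by (cases n) (auto simp: coeff_pderiv coeff_pCons algebra_simps split: nat.split)

lemma fpoly_hypergeometric_equation:
  fixes a b c :: nat
  defines "f \<equiv> fpoly a b c :: 'k::field poly"
  shows "[:0, 1, -1:] * pderiv (pderiv f)
     + [:1 + of_nat b - of_nat c, of_nat a + of_nat c - 1:] * pderiv f
     - [:of_nat a * of_nat c:] * f = 0"
proof (rule poly_eqI)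
  fix n
  have "of_nat n * (of_nat n - 1) - (of_nat a + of_nat c - 1) * of_nat n + of_nat a * of_nat c
      = (of_nat a - of_nat n) * (of_nat c - of_nat n :: 'k)"
    by (simp add: algebra_simps)
  then show "coeff ([:0, 1, -1:] * pderiv (pderiv f)
     + [:1 + of_nat b - of_nat c, of_nat a + of_nat c - 1:] * pderiv f
     - [:of_nat a * of_nat c:] * f) n = coeff 0 n"
    unfolding coeff_hypergeometric_operator f_def
    using coeff_fpoly_recurrence[of n b c a] by (simp add: algebra_simps)
qed

lemma pderiv_linear_power_mult:
  fixes q :: "'a::idom poly"
  shows "pderiv ([:-x, 1:] ^ Suc n * q)
     = [:-x, 1:] ^ n * (smult (of_nat (Suc n)) q + [:-x, 1:] * pderiv q)"
proof -
  have "pderiv [:-x, 1:] = (1 :: 'a poly)"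
    by (simp add: pderiv_pCons)
  then have "pderiv ([:-x, 1:] ^ Suc n * q)
      = [:-x, 1:] ^ Suc n * pderiv q + q * smult (of_nat (Suc n)) ([:-x, 1:] ^ n)"
    by (simp only: pderiv_mult pderiv_power_Suc mult_1_right)
  then show ?thesis
    by (simp add: algebra_simps)
qed

lemma order_le_1_of_second_order_equation:
  fixes f T A C :: "'k::field poly"
  assumes equation: "T * pderiv (pderiv f) + A * pderiv f + C * f = 0"
    and "f \<noteq> 0" and "poly T x \<noteq> 0"
    and below_char: "\<And>j. 0 < j \<Longrightarrow> j \<le> order x f \<Longrightarrow> of_nat j \<noteq> (0::'k)"
  shows "order x f \<le> 1"
proof (rule ccontr)
  assume "\<not> order x f \<le> 1"
  define k where "k = order x f - 2"
  have m: "order x f = Suc (Suc k)"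
    using \<open>\<not> order x f \<le> 1\<close> unfolding k_def by simp
  define g where "g = [:-x, 1:]"
  obtain q where f: "f = g ^ Suc (Suc k) * q" and "\<not> g dvd q"
    using order_decomp[OF \<open>f \<noteq> 0\<close>, of x] unfolding g_def m by blast
  then have "poly q x \<noteq> 0"
    unfolding g_def by (simp add: poly_eq_0_iff_dvd)
  define r1 where "r1 = smult (of_nat (Suc (Suc k))) q + g * pderiv q"
  define r2 where "r2 = smult (of_nat (Suc k)) r1 + g * pderiv r1"
  have f': "pderiv f = g ^ Suc k * r1"
    unfolding f r1_def g_def by (rule pderiv_linear_power_mult)
  have f'': "pderiv (pderiv f) = g ^ k * r2"
    unfolding f' r2_def g_def by (rule pderiv_linear_power_mult)
  have "T * pderiv (pderiv f) + A * pderiv f + C * f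
      = g ^ k * (T * r2 + A * g * r1 + C * g * g * q)"
    by (subst f'', subst f', subst f) (simp add: power_Suc algebra_simps)
  with equation have "g ^ k * (T * r2 + A * g * r1 + C * g * g * q) = 0"
    by simp
  then have "T * r2 + A * g * r1 + C * g * g * q = 0"
    unfolding g_def by simp
  moreover have "poly g x = 0"
    unfolding g_def by simp
  then have "poly (T * r2 + A * g * r1 + C * g * g * q) x = poly T x * poly r2 x"
    by simp
  ultimately have "poly T x * poly r2 x = 0"
    by simp
  moreover have "poly r2 x = of_nat (Suc k) * (of_nat (Suc (Suc k)) * poly q x)"
    using \<open>poly g x = 0\<close> by (simp add: r1_def r2_def)
  moreover have "of_nat (Suc k) \<noteq> (0::'k)" "of_nat (Suc (Suc k)) \<noteq> (0::'k)"
    by (rule below_char; simp add: m)+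
  ultimately show False
    using \<open>poly T x \<noteq> 0\<close> \<open>poly q x \<noteq> 0\<close> by simp
qed

lemma of_nat_fact_neq_0_below_CHAR:
  assumes "n < CHAR('a::{semiring_1, semiring_no_zero_divisors})"
  shows "of_nat (fact n) \<noteq> (0::'a)"
  using assms
proof (induction n)
  case (Suc n)
  have "of_nat (Suc n) \<noteq> (0::'a)"
    unfolding of_nat_eq_0_iff_char_dvd using Suc.prems by (auto dest: dvd_imp_le)
  with Suc show ?case by (simp only: fact_Suc of_nat_mult mult_eq_0_iff) simp
qed simp

lemma of_nat_binomial_neq_0_below_CHAR:
  assumes "n < CHAR('a::{semiring_1, semiring_no_zero_divisors})" and "k \<le> n"
  shows "of_nat (n choose k) \<noteq> (0::'a)"
proof
  assume "of_nat (n choose k) = (0::'a)"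
  then have "of_nat (fact n) = (0::'a)"
    by (metis binomial_fact_lemma[OF \<open>k \<le> n\<close>] mult_zero_right of_nat_mult)
  with of_nat_fact_neq_0_below_CHAR[OF \<open>n < CHAR('a)\<close>] show False by simp
qed

lemma fpoly_neq_0:
  assumes "a < CHAR('k::field)" and "b < CHAR('k)" and "c \<le> a + b"
  shows "fpoly a b c \<noteq> (0 :: 'k poly)"
proof -
  have "coeff (fpoly a b c :: 'k poly) (min a c) \<noteq> 0"
    using assms by (simp add: coeff_fpoly of_nat_binomial_neq_0_below_CHAR)
  then show ?thesis by auto
qed

lemma degree_fpoly_le: "degree (fpoly a b c :: 'k::field poly) \<le> a"
  by (rule degree_le) (simp add: coeff_fpoly binomial_eq_0)

theorem propositionA6:
  fixes p a b c :: nat and x :: "'k::alg_closed_field"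
  assumes "prime p" and "CHAR('k) = p"
    and "a \<le> p - 1" and "b \<le> p - 1" and "c \<le> a + b"
    and "x \<noteq> 0" and "x \<noteq> 1" and "poly (fpoly a b c) x = 0"
  shows "order x (fpoly a b c) = 1"
proof -
  define f where "f = (fpoly a b c :: 'k poly)"
  have "a < p" "b < p"
    using assms(3,4) prime_gt_1_nat[OF assms(1)] by linarith+
  then have "f \<noteq> 0"
    unfolding f_def using assms(2,5) by (simp add: fpoly_neq_0)
  then have "order x f \<noteq> 0"
    using assms(8) order_root unfolding f_def by blast
  have "order x f < p"
    using order_degree[OF \<open>f \<noteq> 0\<close>] degree_fpoly_le[of a b c] \<open>a < p\<close>
    unfolding f_def by (meson le_less_trans)
  have "order x f \<le> 1"
  proof (rule order_le_1_of_second_order_equation)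
    show "[:0, 1, -1:] * pderiv (pderiv f)
        + [:1 + of_nat b - of_nat c, of_nat a + of_nat c - 1:] * pderiv f
        + (- [:of_nat a * of_nat c:]) * f = 0"
      using fpoly_hypergeometric_equation[of a b c] unfolding f_def by simp
    show "poly [:0, 1, -1:] x \<noteq> 0"
      using assms(6,7) by (simp add: algebra_simps)
    show "of_nat j \<noteq> (0::'k)" if "0 < j" "j \<le> order x f" for j
      using that \<open>order x f < p\<close> assms(2) by (auto simp: of_nat_eq_0_iff_char_dvd dest: dvd_imp_le)
  qed fact
  with \<open>order x f \<noteq> 0\<close> show ?thesis
    unfolding f_def by simp
qed

end
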